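(* Let $(X,U)$ be a minimizer of Problem 1 and let $(K,H,G,F)$ be the unique solution of $\begin{bmatrix} K & H \\ G & F \end{bmatrix}\begin{bmatrix} X \\ Z \end{bmatrix} = \begin{bmatrix} U \\ V \end{bmatrix}$. Then the dynamic state feedback $z(t+1)=Fz(t)+Gx(t)$, $u(t)=Hz(t)+Kx(t)$ is an $N$-step deadbeat controller for the plant $x(t+1)=Ax(t)+Bu(t)$: the closed-loop matrix $\mathcal{A}_{cl}=\begin{bmatrix}A+BK & BH\\ G & F\end{bmatrix}$ is nilpotent with $\mathcal{A}_{cl}^N=0$ (all its eigenvalues are $0$), so that for every initial state $(x(0),z(0))$ the closed-loop state satisfies $(x(t),z(t))=0$ for all $t\ge N$.
   Context: Plant: $x(t+1)=Ax(t)+Bu(t)$, $y(t)=Cx(t)+Du(t)$ with $x\in\mathbb{R}^n$, $u\in\mathbb{R}^m$, $y\in\mathbb{R}^p$, $(A,B)$ reachable, horizon $N\ge 2$. $P\in\mathbb{R}^{N\times N}$ is the nilpotent shift matrix $P=\begin{bmatrix}0 & 0\\ I_{N-1} & 0\end{bmatrix}$; $\otimes$ is the Kronecker product; $\mathrm{e}_1\in\mathbb{R}^N$ is the first standard basis vector; $\|W\|_1=\sum_{i,j}|w_{ij}|$; $\mathrm{abs}(W)$ is entrywise absolute value; $\mathbf{1}_k$ is the all-ones vector. Given $s\in\mathbb{R}^p$, Problem 1 is: minimize $\|U\|_1$ over $X\in\mathbb{R}^{n\times nN}$, $U\in\mathbb{R}^{m\times nN}$ subject to $AX+BU=X(P\otimes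 I_n)$, $X(\mathrm{e}_1\otimes I_n)=I_n$, and $\mathrm{abs}(CX+DU)\le s(\mathbf{1}_n\otimes\mathbf{1}_N)^\top$ entrywise. $Z=\begin{bmatrix}0_{n(N-1)\times n} & I_{n(N-1)}\end{bmatrix}$, $V=Z(P\otimes I_n)$. *)

theory Defs
  imports "Jordan_Normal_Form.Matrix"
begin

definition kron :: "real mat \<Rightarrow> real mat \<Rightarrow> real mat" where
  "kron A B = mat (dim_row A * dim_row B) (dim_col A * dim_col B)
     (\<lambda>(i,j). A $$ (i div dim_row B, j div dim_col B) * B $$ (i mod dim_row B, j mod dim_col B))"

definition shift_mat :: "nat \<Rightarrow> real mat" where
  "shift_mat N = mat N N (\<lambda>(i,j). if i = Suc j then 1 else 0)"

definition e1_mat :: "nat \<Rightarrow> real mat" where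
  "e1_mat N = mat N 1 (\<lambda>(i,j). if i = 0 then 1 else 0)"

definition norm1 :: "real mat \<Rightarrow> real" where
  "norm1 W = (\<Sum>i<dim_row W. \<Sum>j<dim_col W. \<bar>W $$ (i,j)\<bar>)"

fun state_traj :: "real mat \<Rightarrow> real mat \<Rightarrow> real vec \<Rightarrow> (nat \<Rightarrow> real vec) \<Rightarrow> nat \<Rightarrow> real vec" where
  "state_traj A B x0 u 0 = x0"
| "state_traj A B x0 u (Suc t) = A *\<^sub>v state_traj A B x0 u t + B *\<^sub>v u t"

definition reachable :: "nat \<Rightarrow> nat \<Rightarrow> real mat \<Rightarrow> real mat \<Rightarrow> bool" where
  "reachable n m A B \<longleftrightarrow> (\<forall>x \<in> carrier_vec n. \<exists>u k. (\<forall>t. u t \<in> carrier_vec m)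
      \<and> state_traj A B (0\<^sub>v n) u k = x)"

definition problem1_feasible ::
  "nat \<Rightarrow> nat \<Rightarrow> nat \<Rightarrow> nat \<Rightarrow> real mat \<Rightarrow> real mat \<Rightarrow> real mat \<Rightarrow> real mat \<Rightarrow> real vec
   \<Rightarrow> real mat \<Rightarrow> real mat \<Rightarrow> bool" where
  "problem1_feasible n m p N A B C D s X U \<longleftrightarrow>
     X \<in> carrier_mat n (n * N) \<and> U \<in> carrier_mat m (n * N) \<and>
     A * X + B * U = X * kron (shift_mat N) (1\<^sub>m n) \<and>
     X * kron (e1_mat N) (1\<^sub>m n) = 1\<^sub>m n \<and>
     (\<forall>i < p. \<forall>j < n * N. \<bar>(C * X + D * U) $$ (i,j)\<bar> \<le> s $ i)"

definition problem1_minimizer ::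
  "nat \<Rightarrow> nat \<Rightarrow> nat \<Rightarrow> nat \<Rightarrow> real mat \<Rightarrow> real mat \<Rightarrow> real mat \<Rightarrow> real mat \<Rightarrow> real vec
   \<Rightarrow> real mat \<Rightarrow> real mat \<Rightarrow> bool" where
  "problem1_minimizer n m p N A B C D s X U \<longleftrightarrow>
     problem1_feasible n m p N A B C D s X U \<and>
     (\<forall>X' U'. problem1_feasible n m p N A B C D s X' U' \<longrightarrow> norm1 U \<le> norm1 U')"

text \<open>Z = [0_{n(N-1) x n}  I_{n(N-1)}] and V = Z (P \<otimes> I_n).\<close>
definition Zmat :: "nat \<Rightarrow> nat \<Rightarrow> real mat" where
  "Zmat n N = mat (n * (N - 1)) (n * N) (\<lambda>(i,j). if j = i + n then 1 else 0)"

definition Vmat :: "nat \<Rightarrow> nat \<Rightarrow> real mat" where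
  "Vmat n N = Zmat n N * kron (shift_mat N) (1\<^sub>m n)"

end

theory Submission
  imports Defs "Jordan_Normal_Form.Determinant"
begin

text \<open>
  Stack the optimal state matrix on top of the selector: \<open>T = [X; Z]\<close>. The constraint
  \<open>X (e\<^sub>1 \<otimes> I\<^sub>n) = I\<^sub>n\<close> says that the first block column of \<open>X\<close> is the identity, so \<open>T\<close> is
  unit upper triangular and hence invertible. The dynamics constraint \<open>A X + B U = X (P \<otimes> I\<^sub>n)\<close>
  together with the defining equations of \<open>K, H, G, F\<close> gives \<open>A\<^sub>c\<^sub>l T = T (P \<otimes> I\<^sub>n)\<close>, so the
  closed-loop matrix is similar to the nilpotent block shift \<open>P \<otimes> I\<^sub>n\<close>, whose \<open>N\<close>-th power
  vanishes.
\<close>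

definition lower_shift_mat :: "nat \<Rightarrow> nat \<Rightarrow> 'a :: zero_neq_one mat" where
  "lower_shift_mat r d = mat r r (\<lambda>(i, j). if i = j + d then 1 else 0)"

lemma lower_shift_mat_carrier [simp]: "lower_shift_mat r d \<in> carrier_mat r r"
  by (simp add: lower_shift_mat_def)

lemma lower_shift_mat_pow:
  "lower_shift_mat r d ^\<^sub>m k = (lower_shift_mat r (k * d) :: 'a :: semiring_1 mat)"
proof (induction k)
  case 0
  show ?case by (rule eq_matI) (auto simp: lower_shift_mat_def)
next
  case (Suc k)
  show ?case
  proof (rule eq_matI)
    fix i j assume "i < dim_row (lower_shift_mat r (Suc k * d) :: 'a mat)"
      and "j < dim_col (lower_shift_mat r (Suc k * d) :: 'a mat)"
    then have i: "i < r" and j: "j < r" by (auto simp: lower_shift_mat_def)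
    have "(lower_shift_mat r d ^\<^sub>m Suc k) $$ (i, j)
        = (\<Sum>l<r. (if i = l + k * d then 1 else 0) * (if l = j + d then 1 else (0 :: 'a)))"
      unfolding pow_mat.simps Suc.IH using i j
      by (simp add: lower_shift_mat_def scalar_prod_def atLeast0LessThan)
    also have "\<dots> = (\<Sum>l<r. if l = j + d then (if i = l + k * d then 1 else 0) else 0)"
      by (rule sum.cong) auto
    also have "\<dots> = lower_shift_mat r (Suc k * d) $$ (i, j)"
      using i j by (auto simp: sum.delta lower_shift_mat_def)
    finally show "(lower_shift_mat r d ^\<^sub>m Suc k :: 'a mat) $$ (i, j) = lower_shift_mat r (Suc k * d) $$ (i, j)" .
  qed (auto simp: lower_shift_mat_def)
qed

lemma lower_shift_mat_eq_0:
  assumes "r \<le> d"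
  shows "lower_shift_mat r d = 0\<^sub>m r r"
  using assms by (intro eq_matI) (auto simp: lower_shift_mat_def)

lemma lower_shift_mat_pow_eq_0:
  assumes "r \<le> k * d"
  shows "lower_shift_mat r d ^\<^sub>m k = (0\<^sub>m r r :: 'a :: semiring_1 mat)"
  using assms by (simp add: lower_shift_mat_pow lower_shift_mat_eq_0)

lemma div_mod_eq_Suc_iff:
  assumes "0 < (n :: nat)"
  shows "i div n = Suc (j div n) \<and> i mod n = j mod n \<longleftrightarrow> i = j + n"
proof
  assume h: "i div n = Suc (j div n) \<and> i mod n = j mod n"
  have "i = n * (i div n) + i mod n" by simp
  also have "\<dots> = n * (j div n) + j mod n + n" using h by simp
  finally show "i = j + n" by simp
qed (use assms in simp)

lemma kron_shift_mat_one: "kron (shift_mat N) (1\<^sub>m n) = lower_shift_mat (n * N) n"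
proof (rule eq_matI)
  fix i j assume "i < dim_row (lower_shift_mat (n * N) n :: real mat)"
    and "j < dim_col (lower_shift_mat (n * N) n :: real mat)"
  then have i: "i < n * N" and j: "j < n * N" by (auto simp: lower_shift_mat_def)
  then have n: "0 < n" by (cases n) auto
  have "i div n < N" "j div n < N"
    using i j n by (auto simp: less_mult_imp_div_less mult.commute)
  then show "kron (shift_mat N) (1\<^sub>m n) $$ (i, j) = lower_shift_mat (n * N) n $$ (i, j)"
    using i j n div_mod_eq_Suc_iff[OF n, of i j]
    by (auto simp: kron_def shift_mat_def lower_shift_mat_def mult.commute)
qed (auto simp: kron_def shift_mat_def lower_shift_mat_def mult.commute)

lemma mult_kron_e1_mat_one:
  assumes X: "X \<in> carrier_mat r (n * N)" and N: "0 < N"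
  shows "X * kron (e1_mat N) (1\<^sub>m n) = mat r n (\<lambda>(i, j). X $$ (i, j))"
proof (rule eq_matI)
  fix i j assume "i < dim_row (mat r n (\<lambda>(i, j). X $$ (i, j)))"
    and "j < dim_col (mat r n (\<lambda>(i, j). X $$ (i, j)))"
  then have i: "i < r" and j: "j < n" by auto
  have e1_entry: "kron (e1_mat N) (1\<^sub>m n) $$ (k, j) = (if k = j then 1 else 0)" if k: "k < n * N" for k
  proof -
    have "k div n < N" using k j by (auto simp: less_mult_imp_div_less mult.commute)
    moreover have "k div n = 0 \<and> k mod n = j \<longleftrightarrow> k = j"
      using j by (metis div_less mod_less mod_mult_div_eq add_0 mult_0_right)
    ultimately show ?thesis
      using k j by (auto simp: kron_def e1_mat_def mult.commute)
  qed
  have "(X * kron (e1_mat N) (1\<^sub>m n)) $$ (i, j) = (\<Sum>k<n * N. X $$ (i, k) * kron (e1_mat N) (1\<^sub>m n) $$ (k, j))"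
    using X i j by (simp add: scalar_prod_def atLeast0LessThan kron_def e1_mat_def mult.commute)
  also have "\<dots> = (\<Sum>k<n * N. X $$ (i, k) * (if k = j then 1 else 0))"
    by (rule sum.cong) (simp_all add: e1_entry)
  also have "\<dots> = X $$ (i, j)"
    using j N by (simp add: sum.delta if_distrib cong: if_cong)
      (metis One_nat_def Suc_leI mult_le_mono2 mult_1_right order_less_le_trans)
  finally show "(X * kron (e1_mat N) (1\<^sub>m n)) $$ (i, j) = mat r n (\<lambda>(i, j). X $$ (i, j)) $$ (i, j)"
    using i j by simp
qed (use X in \<open>auto simp: kron_def e1_mat_def\<close>)

lemma det_append_rows_Zmat:
  assumes X: "X \<in> carrier_mat n (n * N)" and N: "0 < N"
    and X_lead: "\<And>i j. i < n \<Longrightarrow> j < n \<Longrightarrow> X $$ (i, j) = (if i = j then 1 else 0)"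
  shows "det (X @\<^sub>r Zmat n N) = 1"
proof -
  let ?T = "X @\<^sub>r Zmat n N"
  have dims: "n + n * (N - 1) = n * N"
    using N by (cases N) auto
  have T: "?T \<in> carrier_mat (n * N) (n * N)"
    using X dims[symmetric] by (auto simp: Zmat_def)
  have entry: "?T $$ (i, j) = (if i < n then X $$ (i, j) else if j = i then 1 else 0)"
    if "i < n * N" "j < n * N" for i j
    using that X dims by (auto simp: append_rows_def Zmat_def)
  have "upper_triangular ?T"
    using T entry X_lead by auto
  moreover have "diag_mat ?T = replicate (n * N) 1"
    using T entry X_lead by (intro nth_equalityI) (auto simp: diag_mat_def)
  ultimately show ?thesis
    using det_upper_triangular[OF _ T] by simp
qed

lemma append_rows_mult:
  assumes A: "A \<in> carrier_mat nr1 nc" and B: "B \<in> carrier_mat nr2 nc" and M: "M \<in> carrier_mat nc k"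
  shows "(A @\<^sub>r B) * M = (A * M) @\<^sub>r (B * M)"
proof (rule eq_matI)
  fix i j assume i: "i < dim_row ((A * M) @\<^sub>r (B * M))" and j: "j < dim_col ((A * M) @\<^sub>r (B * M))"
  have "row (A @\<^sub>r B) i = (if i < nr1 then row A i else row B (i - nr1))"
    using A B i M by (intro eq_vecI) (auto simp: append_rows_def)
  then show "((A @\<^sub>r B) * M) $$ (i, j) = ((A * M) @\<^sub>r (B * M)) $$ (i, j)"
    using A B M i j by (auto simp: append_rows_def)
qed (use A B M in \<open>auto simp: append_rows_def\<close>)

lemma four_block_mat_mult_append_rows:
  assumes A: "A \<in> carrier_mat nr1 n1" and B: "B \<in> carrier_mat nr1 n2"
    and C: "C \<in> carrier_mat nr2 n1" and D: "D \<in> carrier_mat nr2 n2"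
    and X: "X \<in> carrier_mat n1 k" and Z: "Z \<in> carrier_mat n2 k"
  shows "four_block_mat A B C D * (X @\<^sub>r Z) = (A * X + B * Z) @\<^sub>r (C * X + D * Z)"
proof -
  have "four_block_mat A B C D * (X @\<^sub>r Z)
      = four_block_mat (A * X + B * Z) (A * 0\<^sub>m n1 0 + B * 0\<^sub>m n2 0)
          (C * X + D * Z) (C * 0\<^sub>m n1 0 + D * 0\<^sub>m n2 0)"
    unfolding append_rows_def using X Z carrier_matD[OF X] carrier_matD[OF Z]
    by (simp only:, intro mult_four_block_mat[OF A B C D]) auto
  also have "\<dots> = (A * X + B * Z) @\<^sub>r (C * X + D * Z)"
    unfolding append_rows_def using A B C D X Z by (intro cong_four_block_mat) auto
  finally show ?thesis .
qed

lemma closed_loop_intertwining: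
  assumes A: "A \<in> carrier_mat n n" and B: "B \<in> carrier_mat n m"
    and K: "K \<in> carrier_mat m n" and H: "H \<in> carrier_mat m q"
    and G: "G \<in> carrier_mat q n" and F: "F \<in> carrier_mat q q"
    and X: "X \<in> carrier_mat n r" and Z: "Z \<in> carrier_mat q r" and S: "S \<in> carrier_mat r r"
    and dyn: "A * X + B * U = X * S"
    and top: "K * X + H * Z = U" and bot: "G * X + F * Z = Z * S"
  shows "four_block_mat (A + B * K) (B * H) G F * (X @\<^sub>r Z) = (X @\<^sub>r Z) * S"
proof -
  have KX: "K * X \<in> carrier_mat m r" and HZ: "H * Z \<in> carrier_mat m r"
    using K X H Z by auto
  have "(A + B * K) * X + B * H * Z = A * X + (B * (K * X) + B * (H * Z))"
    using A B K X H Z KX HZ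
    by (simp add: add_mult_distrib_mat assoc_add_mat[of "A * X" n r])
  also have "\<dots> = X * S"
    using dyn top mult_add_distrib_mat[OF B KX HZ] by simp
  finally have "(A + B * K) * X + B * H * Z = X * S" .
  then show ?thesis
    using four_block_mat_mult_append_rows[of "A + B * K" n n "B * H" q G q F X r Z]
      append_rows_mult[OF X Z S] A B K H G F X Z bot
    by simp
qed

lemma pow_mat_eq_0_of_intertwining:
  fixes M T S :: "'a :: field mat"
  assumes M: "M \<in> carrier_mat d d" and T: "T \<in> carrier_mat d d" and S: "S \<in> carrier_mat d d"
    and det: "det T \<noteq> 0" and MT: "M * T = T * S" and nil: "S ^\<^sub>m k = 0\<^sub>m d d"
  shows "M ^\<^sub>m k = 0\<^sub>m d d"
proof -
  obtain Ti where Ti: "Ti \<in> carrier_mat d d" and TTi: "T * Ti = 1\<^sub>m d" and TiT: "Ti * T = 1\<^sub>m d"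
    using det_non_zero_imp_unit[OF T det, of undefined] unfolding Units_def ring_mat_def by auto
  have "M = M * T * Ti"
    using M T Ti TTi by (simp add: assoc_mult_mat[of M d d T d Ti d])
  also have "\<dots> = T * S * Ti"
    by (simp add: MT)
  finally have "similar_mat_wit M S T Ti"
    using M T S Ti TTi TiT by (intro similar_mat_witI) auto
  then have "M ^\<^sub>m k = T * S ^\<^sub>m k * Ti"
    by (rule similar_mat_wit_pow_id)
  then show ?thesis
    using T Ti by (simp add: nil)
qed

lemma nilpotent_recurrence_eq_0:
  assumes M: "M \<in> carrier_mat d d" and nil: "M ^\<^sub>m k = 0\<^sub>m d d"
    and w0: "w 0 \<in> carrier_vec d" and step: "\<And>t. w (Suc t) = M *\<^sub>v w t" and t: "k \<le> t"
  shows "w t = 0\<^sub>v d"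
proof -
  have w: "w t \<in> carrier_vec d" for t
    by (induction t) (use M w0 step in auto)
  have w_pow: "w (s + j) = M ^\<^sub>m j *\<^sub>v w s" for s j
  proof (induction j arbitrary: s)
    case 0
    show ?case using M w[of s] by simp
  next
    case (Suc j)
    have "w (s + Suc j) = M ^\<^sub>m j *\<^sub>v (M *\<^sub>v w s)"
      using Suc.IH[of "Suc s"] step[of s] by simp
    also have "\<dots> = M ^\<^sub>m Suc j *\<^sub>v w s"
      using M w[of s] by (simp add: assoc_mult_mat_vec[of _ d d M d])
    finally show ?case .
  qed
  have "w t = M ^\<^sub>m k *\<^sub>v w (t - k)"
    using w_pow[of "t - k" k] t by simp
  then show ?thesis
    using w[of "t - k"] by (auto simp: nil scalar_prod_def)
qed

lemma closed_loop_mult_vec: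
  assumes A: "A \<in> carrier_mat n n" and B: "B \<in> carrier_mat n m"
    and K: "K \<in> carrier_mat m n" and H: "H \<in> carrier_mat m q"
    and G: "G \<in> carrier_mat q n" and F: "F \<in> carrier_mat q q"
    and x: "x \<in> carrier_vec n" and z: "z \<in> carrier_vec q"
  shows "four_block_mat (A + B * K) (B * H) G F *\<^sub>v (x @\<^sub>v z)
    = (A *\<^sub>v x + B *\<^sub>v (H *\<^sub>v z + K *\<^sub>v x)) @\<^sub>v (F *\<^sub>v z + G *\<^sub>v x)"
proof -
  have "(A + B * K) *\<^sub>v x + (B * H) *\<^sub>v z = A *\<^sub>v x + B *\<^sub>v (H *\<^sub>v z + K *\<^sub>v x)"
    using A B K H x z
    by (simp add: add_mult_distrib_mat_vec mult_add_distrib_mat_vec) (intro eq_vecI, auto simp: ac_simps)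
  moreover have "G *\<^sub>v x + F *\<^sub>v z = F *\<^sub>v z + G *\<^sub>v x"
    using G F x z by (intro comm_add_vec[of _ q]) auto
  ultimately show ?thesis
    using four_block_mat_mult_vec[of "A + B * K" n n "B * H" q G q F x z] A B K H G F x z by simp
qed

lemma closed_loop_trajectory_eq_0:
  assumes A: "A \<in> carrier_mat n n" and B: "B \<in> carrier_mat n m"
    and K: "K \<in> carrier_mat m n" and H: "H \<in> carrier_mat m q"
    and G: "G \<in> carrier_mat q n" and F: "F \<in> carrier_mat q q"
    and nil: "four_block_mat (A + B * K) (B * H) G F ^\<^sub>m k = 0\<^sub>m (n + q) (n + q)"
    and x0: "x 0 \<in> carrier_vec n" and z0: "z 0 \<in> carrier_vec q"
    and u: "\<And>t. u t = H *\<^sub>v z t + K *\<^sub>v x t"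
    and x: "\<And>t. x (Suc t) = A *\<^sub>v x t + B *\<^sub>v u t"
    and z: "\<And>t. z (Suc t) = F *\<^sub>v z t + G *\<^sub>v x t"
    and t: "k \<le> t"
  shows "x t = 0\<^sub>v n \<and> z t = 0\<^sub>v q"
proof -
  have xz: "x t \<in> carrier_vec n \<and> z t \<in> carrier_vec q" for t
    by (induction t) (use A B K H G F x0 z0 u x z in auto)
  have "x t @\<^sub>v z t = 0\<^sub>v (n + q)"
  proof (rule nilpotent_recurrence_eq_0[OF _ nil _ _ t])
    show "four_block_mat (A + B * K) (B * H) G F \<in> carrier_mat (n + q) (n + q)"
      using A B K H G F by auto
    show "x 0 @\<^sub>v z 0 \<in> carrier_vec (n + q)"
      using x0 z0 by auto
    show "x (Suc s) @\<^sub>v z (Suc s) = four_block_mat (A + B * K) (B * H) G F *\<^sub>v (x s @\<^sub>v z s)" for s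
      using closed_loop_mult_vec[OF A B K H G F] xz u x z by simp
  qed
  moreover have "(0\<^sub>v (n + q) :: 'a vec) = 0\<^sub>v n @\<^sub>v 0\<^sub>v q"
    by (intro eq_vecI) auto
  ultimately show ?thesis
    using xz[of t] append_vec_eq[of "x t" n "0\<^sub>v n"] by simp
qed

lemma feasible_closed_loop_pow_eq_0:
  assumes feas: "problem1_feasible n m p N A B C D s X U" and N: "0 < N"
    and A: "A \<in> carrier_mat n n" and B: "B \<in> carrier_mat n m"
    and K: "K \<in> carrier_mat m n" and H: "H \<in> carrier_mat m (n * (N - 1))"
    and G: "G \<in> carrier_mat (n * (N - 1)) n" and F: "F \<in> carrier_mat (n * (N - 1)) (n * (N - 1))"
    and top: "K * X + H * Zmat n N = U" and bot: "G * X + F * Zmat n N = Vmat n N"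
  shows "four_block_mat (A + B * K) (B * H) G F ^\<^sub>m N = 0\<^sub>m (n * N) (n * N)"
proof -
  let ?q = "n * (N - 1)" and ?T = "X @\<^sub>r Zmat n N" and ?S = "kron (shift_mat N) (1\<^sub>m n)"
    and ?Acl = "four_block_mat (A + B * K) (B * H) G F"
  have dims: "n + ?q = n * N"
    using N by (cases N) auto
  have X: "X \<in> carrier_mat n (n * N)"
    and dyn: "A * X + B * U = X * ?S" and lead: "X * kron (e1_mat N) (1\<^sub>m n) = 1\<^sub>m n"
    using feas by (auto simp: problem1_feasible_def)
  have Z: "Zmat n N \<in> carrier_mat ?q (n * N)" and S: "?S \<in> carrier_mat (n * N) (n * N)"
    by (simp_all add: Zmat_def kron_shift_mat_one)
  have Acl: "?Acl \<in> carrier_mat (n * N) (n * N)" and T: "?T \<in> carrier_mat (n * N) (n * N)"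
    using four_block_carrier_mat[of "A + B * K" n n F ?q] carrier_append_rows[OF X Z] A B K F dims
    by auto
  have "det ?T \<noteq> 0"
  proof -
    have "X $$ (i, j) = (if i = j then 1 else 0)" if "i < n" "j < n" for i j
      using arg_cong[OF lead, of "\<lambda>M. M $$ (i, j)"] that N
      by (simp add: mult_kron_e1_mat_one[OF X])
    then show ?thesis
      using det_append_rows_Zmat[OF X] N by simp
  qed
  moreover have "?Acl * ?T = ?T * ?S"
    using closed_loop_intertwining[OF A B K H G F X Z S dyn top] bot
    by (simp add: Vmat_def)
  moreover have "?S ^\<^sub>m N = 0\<^sub>m (n * N) (n * N)"
    by (simp add: kron_shift_mat_one lower_shift_mat_pow_eq_0)
  ultimately show ?thesis
    by (rule pow_mat_eq_0_of_intertwining[OF Acl T S])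
qed

theorem corollary2:
  fixes n m p N :: nat and A B C D :: "real mat" and s :: "real vec"
    and X U K H G F :: "real mat"
  assumes A: "A \<in> carrier_mat n n" and B: "B \<in> carrier_mat n m"
    and C: "C \<in> carrier_mat p n" and D: "D \<in> carrier_mat p m"
    and s: "s \<in> carrier_vec p"
    and reach: "reachable n m A B"
    and N: "N \<ge> 2"
    and opt: "problem1_minimizer n m p N A B C D s X U"
    and K: "K \<in> carrier_mat m n" and H: "H \<in> carrier_mat m (n * (N - 1))"
    and G: "G \<in> carrier_mat (n * (N - 1)) n" and F: "F \<in> carrier_mat (n * (N - 1)) (n * (N - 1))"
    and sol_top: "K * X + H * Zmat n N = U"
    and sol_bot: "G * X + F * Zmat n N = Vmat n N"
  shows "four_block_mat (A + B * K) (B * H) G F ^\<^sub>m N = 0\<^sub>m (n * N) (n * N) \<and>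
         (\<forall>x z u :: nat \<Rightarrow> real vec.
           x 0 \<in> carrier_vec n \<and> z 0 \<in> carrier_vec (n * (N - 1)) \<and>
           (\<forall>t. u t = H *\<^sub>v z t + K *\<^sub>v x t) \<and>
           (\<forall>t. x (Suc t) = A *\<^sub>v x t + B *\<^sub>v u t) \<and>
           (\<forall>t. z (Suc t) = F *\<^sub>v z t + G *\<^sub>v x t)
         \<longrightarrow> (\<forall>t \<ge> N. x t = 0\<^sub>v n \<and> z t = 0\<^sub>v (n * (N - 1))))"
proof -
  have N0: "0 < N" and dims: "n + n * (N - 1) = n * N"
    using N by (cases N; simp)+
  have feas: "problem1_feasible n m p N A B C D s X U"
    using opt by (simp add: problem1_minimizer_def)
  have nil: "four_block_mat (A + B * K) (B * H) G F ^\<^sub>m N = 0\<^sub>m (n * N) (n * N)"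
    by (rule feasible_closed_loop_pow_eq_0[OF feas N0 A B K H G F sol_top sol_bot])
  moreover have "x t = 0\<^sub>v n \<and> z t = 0\<^sub>v (n * (N - 1))"
    if "x 0 \<in> carrier_vec n" "z 0 \<in> carrier_vec (n * (N - 1))" "\<forall>t. u t = H *\<^sub>v z t + K *\<^sub>v x t"
      "\<forall>t. x (Suc t) = A *\<^sub>v x t + B *\<^sub>v u t" "\<forall>t. z (Suc t) = F *\<^sub>v z t + G *\<^sub>v x t" "N \<le> t"
    for x z u :: "nat \<Rightarrow> real vec" and t
    using that by (intro closed_loop_trajectory_eq_0[OF A B K H G F nil[folded dims], of x z u]) auto
  ultimately show ?thesis
    by blast
qed

end
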